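(* Let $X$ be a compact $\mathbb{R}$-tree. Then no branch point of $X$ belongs to the support of the diversity-maximizing measure of $X$.
   Context: An $\mathbb{R}$-tree is a uniquely geodesic metric space (any two points $x,y$ are joined by a unique segment $\llbracket x,y\rrbracket$, a subset isometric to a compact interval with endpoints $x,y$) such that $\llbracket x,z\rrbracket\subseteq\llbracket x,y\rrbracket\cup\llbracket y,z\rrbracket$ for all $x,y,z$. The degree of a point $x$ is the number of connected components of $X\setminus\{x\}$; branch points are points of degree at least $3$. For a compact metric space $X$, the diversity-maximizing measure is a Borel probability measure $\mu$ minimizing $\int_X\int_X e^{-d(x,y)}\mu(dx)\mu(dy)$ over all Borel probability measures; compact $\mathbb{R}$-trees are of negative type, so such a minimizer exists and is unique. The support of $\mu$ is its closed support. *)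

theory Defs
  imports "HOL-Analysis.Analysis" "HOL-Probability.Probability"
begin

definition is_segment :: "'a::metric_space set \<Rightarrow> 'a \<Rightarrow> 'a \<Rightarrow> 'a set \<Rightarrow> bool" where
  "is_segment X x y S \<longleftrightarrow> S \<subseteq> X \<and>
     (\<exists>\<gamma>::real \<Rightarrow> 'a. \<gamma> ` {0..dist x y} = S \<and> \<gamma> 0 = x \<and> \<gamma> (dist x y) = y \<and>
        (\<forall>s\<in>{0..dist x y}. \<forall>t\<in>{0..dist x y}. dist (\<gamma> s) (\<gamma> t) = \<bar>s - t\<bar>))"

definition segment_in :: "'a::metric_space set \<Rightarrow> 'a \<Rightarrow> 'a \<Rightarrow> 'a set" where
  "segment_in X x y = (THE S. is_segment X x y S)"

definition uniquely_geodesic :: "'a::metric_space set \<Rightarrow> bool" where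
  "uniquely_geodesic X \<longleftrightarrow> (\<forall>x\<in>X. \<forall>y\<in>X. \<exists>!S. is_segment X x y S)"

definition R_tree :: "'a::metric_space set \<Rightarrow> bool" where
  "R_tree X \<longleftrightarrow> uniquely_geodesic X \<and>
     (\<forall>x\<in>X. \<forall>y\<in>X. \<forall>z\<in>X. segment_in X x z \<subseteq> segment_in X x y \<union> segment_in X y z)"

definition branch_point :: "'a::metric_space set \<Rightarrow> 'a \<Rightarrow> bool" where
  "branch_point X x \<longleftrightarrow> x \<in> X \<and>
     (infinite (components (X - {x})) \<or> card (components (X - {x})) \<ge> 3)"

definition borel_prob_on :: "'a::metric_space set \<Rightarrow> 'a measure \<Rightarrow> bool" where
  "borel_prob_on X M \<longleftrightarrow> sets M = sets (restrict_space borel X) \<and> prob_space M"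

definition diversity_energy :: "'a::metric_space measure \<Rightarrow> real" where
  "diversity_energy M = (\<integral>x. (\<integral>y. exp (- dist x y) \<partial>M) \<partial>M)"

definition diversity_maximizing :: "'a::metric_space set \<Rightarrow> 'a measure \<Rightarrow> bool" where
  "diversity_maximizing X M \<longleftrightarrow> borel_prob_on X M \<and>
     (\<forall>N. borel_prob_on X N \<longrightarrow> diversity_energy M \<le> diversity_energy N)"

definition measure_support :: "'a::metric_space set \<Rightarrow> 'a measure \<Rightarrow> 'a set" where
  "measure_support X M = {x \<in> X. \<forall>U. open U \<and> x \<in> U \<longrightarrow> measure M (U \<inter> X) > 0}"

end

theory Submission
  imports Defs
begin

text \<open>Write K z for the integral of exp (- dist z y) against the maximizer M, and E for the
  integral of K against M. Comparing M with its mixtures with Dirac masses shows E \<le> K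
  everywhere; as K is 1-Lipschitz, K \<le> E on the support. At a branch point b pick points q1, q2,
  q3 at a small distance t from b in three different components of X - {b}. A segment from q_i to a
  point y outside the i-th component passes through b, so exp (- dist q_i y) equals
  exp (- t) * exp (- dist b y), while inside the component the triangle inequality still bounds it
  by exp t * exp (- dist b y). Summing, K q1 + K q2 + K q3 \<le> (exp t + 2 exp (- t)) K b, which
  is less than 3 K b for t < ln 2; this contradicts K q_i \<ge> E \<ge> K b for b in the support.\<close>

lemma borel_prob_on_prob_space: "borel_prob_on X M \<Longrightarrow> prob_space M"
  unfolding borel_prob_on_def by simp

lemma borel_prob_on_space: "borel_prob_on X M \<Longrightarrow> space M = X"
  using sets_eq_imp_space_eq[of M "restrict_space borel X"]
  unfolding borel_prob_on_def by (simp add: space_restrict_space)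

lemma borel_prob_on_measurable:
  "borel_prob_on X M \<Longrightarrow> g \<in> borel_measurable (restrict_space borel X) \<Longrightarrow> g \<in> borel_measurable M"
  using measurable_cong_sets[of M "restrict_space borel X" borel borel] unfolding borel_prob_on_def
  by blast

lemma borel_prob_on_integrable_bounded:
  fixes g :: "'a::metric_space \<Rightarrow> real"
  assumes "borel_prob_on X M" "g \<in> borel_measurable (restrict_space borel X)" "\<forall>z\<in>X. \<bar>g z\<bar> \<le> B"
  shows "integrable M g"
proof -
  interpret prob_space M by (rule borel_prob_on_prob_space[OF assms(1)])
  show ?thesis
    by (rule integrable_const_bound[where B=B])
      (use assms borel_prob_on_space borel_prob_on_measurable in auto)
qed

lemma borel_prob_on_open_Int_sets:
  assumes "borel_prob_on X M" "open U"
  shows "U \<inter> X \<in> sets M"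
  using assms unfolding borel_prob_on_def by (auto simp: sets_restrict_space)

text \<open>The mixture is the law of a Bernoulli(e) switch between a point drawn from M and x.\<close>
lemma borel_prob_on_mixture_Dirac:
  assumes M: "borel_prob_on X M" and "x \<in> X" and "0 \<le> e" "e \<le> 1"
  obtains N where "borel_prob_on X N"
    and "\<And>g B. g \<in> borel_measurable (restrict_space borel X) \<Longrightarrow> \<forall>z\<in>X. \<bar>g z\<bar> \<le> B \<Longrightarrow>
           integral\<^sup>L N g = (1 - e) * integral\<^sup>L M g + e * (g x :: real)"
proof -
  interpret M: prob_space M by (rule borel_prob_on_prob_space[OF M])
  define Q where "Q = measure_pmf (bernoulli_pmf e)"
  interpret P: pair_prob_space M Q unfolding Q_def pair_prob_space_def pair_sigma_finite_def
    by (simp add: M.prob_space_axioms M.sigma_finite_measure prob_space_imp_sigma_finite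
        prob_space_measure_pmf)
  define f where "f = (\<lambda>\<omega>::'a \<times> bool. if snd \<omega> then x else fst \<omega>)"
  have "sets M = sets (restrict_space borel X)" using M unfolding borel_prob_on_def by auto
  then have f: "f \<in> measurable (M \<Otimes>\<^sub>M Q) (restrict_space borel X)"
    unfolding f_def Q_def using \<open>x \<in> X\<close>
    by (intro measurable_If) (auto simp: space_restrict_space cong: measurable_cong_sets)
  define N where "N = distr (M \<Otimes>\<^sub>M Q) (restrict_space borel X) f"
  show thesis
  proof
    show "borel_prob_on X N"
      unfolding borel_prob_on_def N_def using P.P.prob_space_distr[OF f] by simp
    fix g :: "'a \<Rightarrow> real" and B
    assume g: "g \<in> borel_measurable (restrict_space borel X)" and gB: "\<forall>z\<in>X. \<bar>g z\<bar> \<le> B"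
    have int: "integrable (M \<Otimes>\<^sub>M Q) (\<lambda>(y, c). g (if c then x else y))"
      using measurable_comp[OF f g] gB \<open>x \<in> X\<close> borel_prob_on_space[OF M]
      by (intro P.P.integrable_const_bound[where B=B])
        (auto simp: space_pair_measure f_def comp_def case_prod_beta')
    have "integral\<^sup>L N g = (\<integral>\<omega>. g (f \<omega>) \<partial>(M \<Otimes>\<^sub>M Q))"
      unfolding N_def by (rule integral_distr[OF f g])
    also have "\<dots> = (\<integral>c. (\<integral>y. g (if c then x else y) \<partial>M) \<partial>Q)"
      using P.integral_snd[OF int] by (simp add: f_def case_prod_beta')
    also have "\<dots> = (1 - e) * integral\<^sup>L M g + e * g x"
      using \<open>0 \<le> e\<close> \<open>e \<le> 1\<close> unfolding Q_def by (simp add: M.prob_space)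
    finally show "integral\<^sup>L N g = (1 - e) * integral\<^sup>L M g + e * g x" .
  qed
qed

definition diversity_potential :: "'a::metric_space measure \<Rightarrow> 'a \<Rightarrow> real" where
  "diversity_potential M z = (\<integral>y. exp (- dist z y) \<partial>M)"

lemma diversity_energy_eq_integral_potential:
  "diversity_energy M = integral\<^sup>L M (diversity_potential M)"
  unfolding diversity_energy_def diversity_potential_def ..

lemma exp_minus_dist_measurable:
  "(\<lambda>y. exp (- dist z y)) \<in> borel_measurable (restrict_space borel X)"
  by (intro borel_measurable_continuous_on_restrict continuous_intros)

lemma exp_minus_dist_integrable:
  assumes "borel_prob_on X M"
  shows "integrable M (\<lambda>y. exp (- dist z y))"
  by (rule borel_prob_on_integrable_bounded[OF assms exp_minus_dist_measurable, where B=1]) auto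

lemma diversity_potential_pos:
  assumes "borel_prob_on X M"
  shows "0 < diversity_potential M z"
proof -
  interpret prob_space M by (rule borel_prob_on_prob_space[OF assms])
  have "integral\<^sup>L M (\<lambda>y. exp (- dist z y)) \<noteq> 0"
    using integral_nonneg_eq_0_iff_AE[OF exp_minus_dist_integrable[OF assms]] AE_False by simp
  moreover have "0 \<le> integral\<^sup>L M (\<lambda>y. exp (- dist z y))"
    by (rule Bochner_Integration.integral_nonneg) simp
  ultimately show ?thesis unfolding diversity_potential_def by linarith
qed

lemma diversity_potential_le_1:
  assumes "borel_prob_on X M"
  shows "diversity_potential M z \<le> 1"
proof -
  interpret prob_space M by (rule borel_prob_on_prob_space[OF assms])
  have "diversity_potential M z \<le> (\<integral>y. 1 \<partial>M)" unfolding diversity_potential_def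
    by (rule integral_mono[OF exp_minus_dist_integrable[OF assms]]) auto
  then show ?thesis by (simp add: prob_space)
qed

lemma abs_exp_minus_diff_le:
  fixes a b :: real
  assumes "0 \<le> a" "0 \<le> b"
  shows "\<bar>exp (- a) - exp (- b)\<bar> \<le> \<bar>a - b\<bar>"
proof -
  have "exp (- u) - exp (- v) \<le> v - u" if "0 \<le> u" "u \<le> v" for u v :: real
  proof -
    have "exp (- u) - exp (- v) = exp (- u) * (1 - exp (u - v))"
      by (simp add: algebra_simps flip: exp_add)
    also have "\<dots> \<le> 1 - exp (u - v)"
      using that by (intro mult_left_le_one_le) auto
    also have "\<dots> \<le> v - u" using exp_ge_add_one_self[of "u - v"] by linarith
    finally show ?thesis .
  qed
  from this[of a b] this[of b a] assms show ?thesis by (cases "a \<le> b") auto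
qed

lemma diversity_potential_lipschitz:
  assumes "borel_prob_on X M"
  shows "\<bar>diversity_potential M z - diversity_potential M z'\<bar> \<le> dist z z'"
proof -
  interpret prob_space M by (rule borel_prob_on_prob_space[OF assms])
  note int = exp_minus_dist_integrable[OF assms]
  have "\<bar>diversity_potential M z - diversity_potential M z'\<bar>
      = \<bar>\<integral>y. exp (- dist z y) - exp (- dist z' y) \<partial>M\<bar>"
    unfolding diversity_potential_def using int by simp
  also have "\<dots> \<le> (\<integral>y. \<bar>exp (- dist z y) - exp (- dist z' y)\<bar> \<partial>M)"
    by (rule integral_abs_bound)
  also have "\<dots> \<le> (\<integral>y. dist z z' \<partial>M)"
  proof (rule integral_mono)
    fix y
    have "\<bar>exp (- dist z y) - exp (- dist z' y)\<bar> \<le> \<bar>dist z y - dist z' y\<bar>"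
      by (rule abs_exp_minus_diff_le) auto
    also have "\<dots> \<le> dist z z'" by (metis abs_dist_diff_le dist_commute)
    finally show "\<bar>exp (- dist z y) - exp (- dist z' y)\<bar> \<le> dist z z'" .
  qed (use int in auto)
  finally show ?thesis by (simp add: prob_space)
qed

lemma diversity_potential_measurable:
  assumes "borel_prob_on X M"
  shows "diversity_potential M \<in> borel_measurable (restrict_space borel X)"
proof -
  have "1-lipschitz_on X (diversity_potential M)"
    using diversity_potential_lipschitz[OF assms] by (intro lipschitz_onI) (auto simp: dist_real_def)
  then show ?thesis
    by (intro borel_measurable_continuous_on_restrict lipschitz_on_continuous_on)
qed

lemma diversity_potential_integrable:
  assumes "borel_prob_on X M"
  shows "integrable M (diversity_potential M)"
  using diversity_potential_pos[OF assms] diversity_potential_le_1[OF assms]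
  by (intro borel_prob_on_integrable_bounded[OF assms diversity_potential_measurable[OF assms], where B=1])
    (auto simp: less_imp_le)

lemma diversity_energy_le_1:
  assumes "borel_prob_on X M"
  shows "diversity_energy M \<le> 1"
proof -
  interpret prob_space M by (rule borel_prob_on_prob_space[OF assms])
  have "diversity_energy M \<le> (\<integral>z. 1 \<partial>M)"
    unfolding diversity_energy_eq_integral_potential
    by (rule integral_mono[OF diversity_potential_integrable[OF assms]])
      (auto intro: diversity_potential_le_1[OF assms])
  then show ?thesis by (simp add: prob_space)
qed

lemma diversity_energy_mixture_Dirac:
  assumes M: "borel_prob_on X M" and "x \<in> X" and "0 \<le> e" "e \<le> 1"
  obtains N where "borel_prob_on X N"
    and "diversity_energy N = (1 - e)\<^sup>2 * diversity_energy M
           + 2 * e * (1 - e) * diversity_potential M x + e\<^sup>2"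
proof -
  obtain N where N: "borel_prob_on X N"
    and mix: "\<And>g B. g \<in> borel_measurable (restrict_space borel X) \<Longrightarrow> \<forall>z\<in>X. \<bar>g z\<bar> \<le> B \<Longrightarrow>
           integral\<^sup>L N g = (1 - e) * integral\<^sup>L M g + e * (g x :: real)"
    using borel_prob_on_mixture_Dirac[OF assms] by blast
  define h where "h z = (1 - e) * diversity_potential M z + e * exp (- dist x z)" for z
  have potential_N: "diversity_potential N = h"
    using mix[OF exp_minus_dist_measurable, of _ 1]
    by (auto simp: diversity_potential_def h_def dist_commute)
  have "\<bar>h z\<bar> \<le> 1" for z
  proof -
    have "0 \<le> h z"
      using diversity_potential_pos[OF M, of z] \<open>0 \<le> e\<close> \<open>e \<le> 1\<close> unfolding h_def by simp
    moreover have "h z \<le> (1 - e) * 1 + e * 1"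
      unfolding h_def using diversity_potential_le_1[OF M, of z] \<open>0 \<le> e\<close> \<open>e \<le> 1\<close>
      by (intro add_mono mult_left_mono) auto
    ultimately show ?thesis by simp
  qed
  moreover have "h \<in> borel_measurable (restrict_space borel X)"
    unfolding h_def using diversity_potential_measurable[OF M] exp_minus_dist_measurable[of x X] by simp
  moreover have "integral\<^sup>L M h = (1 - e) * diversity_energy M + e * diversity_potential M x"
    unfolding h_def diversity_energy_eq_integral_potential
    using diversity_potential_integrable[OF M] exp_minus_dist_integrable[OF M]
    by (simp flip: diversity_potential_def[of M x])
  ultimately have "diversity_energy N = (1 - e) * ((1 - e) * diversity_energy M
      + e * diversity_potential M x) + e * h x"
    unfolding diversity_energy_eq_integral_potential potential_N by (subst mix) auto
  then show thesis
    using N by (intro that) (auto simp: h_def power2_eq_square algebra_simps)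
qed

lemma diversity_maximizing_borel_prob_on:
  "diversity_maximizing X M \<Longrightarrow> borel_prob_on X M"
  unfolding diversity_maximizing_def by simp

text \<open>If K = diversity_potential M x were below E = diversity_energy M, mixing in a Dirac mass
  at x with weight e = (E - K) / 2 would change the energy by e^2 (E - 2 K - 3) < 0.\<close>
lemma diversity_maximizing_energy_le_potential:
  assumes M: "diversity_maximizing X M" and "x \<in> X"
  shows "diversity_energy M \<le> diversity_potential M x"
proof (rule ccontr)
  define E where "E = diversity_energy M"
  define K where "K = diversity_potential M x"
  define e where "e = (E - K) / 2"
  assume "\<not> diversity_energy M \<le> diversity_potential M x"
  then have "0 < e" unfolding e_def E_def K_def by simp
  have bp: "borel_prob_on X M" using M by (rule diversity_maximizing_borel_prob_on)
  have "0 < K" unfolding K_def by (rule diversity_potential_pos[OF bp])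
  have "E \<le> 1" unfolding E_def by (rule diversity_energy_le_1[OF bp])
  then have "e \<le> 1" using \<open>0 < K\<close> unfolding e_def by simp
  then obtain N where "borel_prob_on X N"
    and EN: "diversity_energy N = (1 - e)\<^sup>2 * E + 2 * e * (1 - e) * K + e\<^sup>2"
    using diversity_energy_mixture_Dirac[OF bp \<open>x \<in> X\<close>] \<open>0 < e\<close>
    unfolding E_def K_def by (metis less_imp_le)
  then have "E \<le> diversity_energy N" using M unfolding diversity_maximizing_def E_def by blast
  also have "diversity_energy N = E + e\<^sup>2 * (E - 2 * K - 3)"
    unfolding EN e_def by (simp add: power2_eq_square field_simps)
  finally have "0 \<le> e\<^sup>2 * (E - 2 * K - 3)" by simp
  moreover have "e\<^sup>2 * (E - 2 * K - 3) < 0"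
    using \<open>0 < e\<close> \<open>0 < K\<close> \<open>E \<le> 1\<close> by (intro mult_pos_neg) auto
  ultimately show False by simp
qed

lemma diversity_maximizing_potential_le_energy:
  assumes M: "diversity_maximizing X M" and x: "x \<in> measure_support X M"
  shows "diversity_potential M x \<le> diversity_energy M"
proof (rule ccontr)
  define E where "E = diversity_energy M"
  define d where "d = diversity_potential M x - E"
  define U where "U = ball x (d / 2) \<inter> X"
  assume "\<not> diversity_potential M x \<le> diversity_energy M"
  then have "0 < d" unfolding d_def E_def by simp
  have bp: "borel_prob_on X M" using M by (rule diversity_maximizing_borel_prob_on)
  interpret prob_space M by (rule borel_prob_on_prob_space[OF bp])
  have "0 < measure M U" using x \<open>0 < d\<close> unfolding measure_support_def U_def by simp
  have U: "U \<in> sets M" unfolding U_def by (rule borel_prob_on_open_Int_sets[OF bp]) simp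
  then have int_U: "integrable M (indicat_real U)"
    by (intro integrable_real_indicator) (auto simp: emeasure_eq_measure)
  have "E + d / 2 * measure M U = (\<integral>z. E + d / 2 * indicator U z \<partial>M)"
    using int_U U by (simp add: prob_space)
  also have "\<dots> \<le> integral\<^sup>L M (diversity_potential M)"
  proof (rule integral_mono[OF _ diversity_potential_integrable[OF bp]])
    fix z assume "z \<in> space M"
    then have "z \<in> X" using borel_prob_on_space[OF bp] by simp
    show "E + d / 2 * indicator U z \<le> diversity_potential M z"
    proof (cases "z \<in> U")
      case True
      then have "diversity_potential M x - diversity_potential M z < d / 2"
        using diversity_potential_lipschitz[OF bp, of x z] unfolding U_def by (auto dest!: abs_le_D1)
      with True show ?thesis unfolding d_def by (simp add: field_simps)
    next
      case False
      then show ?thesis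
        using diversity_maximizing_energy_le_potential[OF M \<open>z \<in> X\<close>] unfolding E_def by simp
    qed
  qed (use int_U in simp)
  also have "\<dots> = E" unfolding E_def diversity_energy_eq_integral_potential ..
  finally show False using mult_pos_pos[OF \<open>0 < d\<close> \<open>0 < measure M U\<close>] by simp
qed

definition geodesic_space :: "'a::metric_space set \<Rightarrow> bool" where
  "geodesic_space X \<longleftrightarrow> (\<forall>x\<in>X. \<forall>y\<in>X. \<exists>S. is_segment X x y S)"

lemma R_tree_imp_geodesic_space: "R_tree X \<Longrightarrow> geodesic_space X"
  unfolding R_tree_def uniquely_geodesic_def geodesic_space_def by (meson ex1_implies_ex)

lemma geodesic_spaceE:
  assumes "geodesic_space X" "x \<in> X" "y \<in> X"
  obtains \<gamma> where "\<gamma> ` {0..dist x y} \<subseteq> X" "\<gamma> 0 = x" "\<gamma> (dist x y) = y"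
    "\<forall>s\<in>{0..dist x y}. \<forall>t\<in>{0..dist x y}. dist (\<gamma> s) (\<gamma> t) = \<bar>s - t\<bar>"
proof -
  obtain S where "is_segment X x y S" using assms unfolding geodesic_space_def by blast
  then show thesis using that unfolding is_segment_def by blast
qed

lemma continuous_on_isometric_path:
  fixes \<gamma> :: "real \<Rightarrow> 'a::metric_space"
  assumes "\<forall>s\<in>S. \<forall>t\<in>S. dist (\<gamma> s) (\<gamma> t) = \<bar>s - t\<bar>"
  shows "continuous_on S \<gamma>"
  using assms by (intro lipschitz_on_continuous_on[of 1] lipschitz_onI) (auto simp: dist_real_def)

lemma dist_through_cut_point:
  assumes X: "geodesic_space X" and C: "C \<in> components (X - {b})"
    and "q \<in> C" "y \<in> X" "y \<notin> C"
  shows "dist q y = dist q b + dist b y"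
proof -
  have "q \<in> X" using in_components_subset[OF C] \<open>q \<in> C\<close> by auto
  obtain \<gamma> where \<gamma>: "\<gamma> ` {0..dist q y} \<subseteq> X" "\<gamma> 0 = q" "\<gamma> (dist q y) = y"
    and iso: "\<forall>s\<in>{0..dist q y}. \<forall>t\<in>{0..dist q y}. dist (\<gamma> s) (\<gamma> t) = \<bar>s - t\<bar>"
    using geodesic_spaceE[OF X \<open>q \<in> X\<close> \<open>y \<in> X\<close>] by blast
  have "\<gamma> 0 \<in> \<gamma> ` {0..dist q y}" "\<gamma> (dist q y) \<in> \<gamma> ` {0..dist q y}" by auto
  then have ends: "q \<in> \<gamma> ` {0..dist q y}" "y \<in> \<gamma> ` {0..dist q y}" using \<gamma>(2,3) by simp_all
  have "b \<in> \<gamma> ` {0..dist q y}"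
  proof (rule ccontr)
    assume "b \<notin> \<gamma> ` {0..dist q y}"
    then have sub: "\<gamma> ` {0..dist q y} \<subseteq> X - {b}" using \<gamma>(1) by auto
    have "connected (\<gamma> ` {0..dist q y})"
      by (rule connected_continuous_image[OF continuous_on_isometric_path[OF iso]]) simp
    moreover note sub
    moreover have "C \<inter> \<gamma> ` {0..dist q y} \<noteq> {}" using ends(1) \<open>q \<in> C\<close> by auto
    ultimately have "\<gamma> ` {0..dist q y} \<subseteq> C" by (rule components_maximal[OF C])
    then show False using ends(2) \<open>y \<notin> C\<close> by auto
  qed
  then obtain s where s: "0 \<le> s" "s \<le> dist q y" "b = \<gamma> s" by auto
  have "dist q b = s" using iso[rule_format, of 0 s] s \<gamma>(2) by simp
  moreover have "dist b y = dist q y - s" using iso[rule_format, of s "dist q y"] s \<gamma>(3) by simp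
  ultimately show ?thesis by simp
qed

lemma exists_point_at_dist_in_component:
  assumes X: "geodesic_space X" and "b \<in> X" and C: "C \<in> components (X - {b})"
    and "p \<in> C" "0 < t" "t \<le> dist b p"
  shows "\<exists>q\<in>C. dist b q = t"
proof -
  have "p \<in> X" using in_components_subset[OF C] \<open>p \<in> C\<close> by auto
  obtain \<gamma> where \<gamma>: "\<gamma> ` {0..dist b p} \<subseteq> X" "\<gamma> 0 = b" "\<gamma> (dist b p) = p"
    and iso: "\<forall>s\<in>{0..dist b p}. \<forall>t\<in>{0..dist b p}. dist (\<gamma> s) (\<gamma> t) = \<bar>s - t\<bar>"
    using geodesic_spaceE[OF X \<open>b \<in> X\<close> \<open>p \<in> X\<close>] by blast
  have dist_b: "dist b (\<gamma> s) = s" if "0 \<le> s" "s \<le> dist b p" for s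
    using iso[rule_format, of 0 s] that \<gamma>(2) by simp
  have sub: "\<gamma> ` {t..dist b p} \<subseteq> X - {b}"
  proof
    fix z assume "z \<in> \<gamma> ` {t..dist b p}"
    then obtain s where "t \<le> s" "s \<le> dist b p" "z = \<gamma> s" by auto
    then show "z \<in> X - {b}" using \<gamma>(1) dist_b[of s] \<open>0 < t\<close> by auto
  qed
  have "continuous_on {t..dist b p} \<gamma>"
    by (rule continuous_on_subset[OF continuous_on_isometric_path[OF iso]]) (use \<open>0 < t\<close> in auto)
  then have "connected (\<gamma> ` {t..dist b p})" by (rule connected_continuous_image) simp
  moreover note sub
  moreover have "\<gamma> (dist b p) \<in> \<gamma> ` {t..dist b p}" using \<open>t \<le> dist b p\<close> by auto
  then have "C \<inter> \<gamma> ` {t..dist b p} \<noteq> {}" using \<gamma>(3) \<open>p \<in> C\<close> by auto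
  ultimately have "\<gamma> ` {t..dist b p} \<subseteq> C" by (rule components_maximal[OF C])
  then have "\<gamma> t \<in> C" using \<open>t \<le> dist b p\<close> by auto
  then show ?thesis using dist_b[of t] \<open>0 < t\<close> \<open>t \<le> dist b p\<close> by auto
qed

lemma obtain_three_distinct:
  assumes "infinite A \<or> 3 \<le> card A"
  obtains a b c where "a \<in> A" "b \<in> A" "c \<in> A" "a \<noteq> b" "b \<noteq> c" "a \<noteq> c"
proof -
  obtain B where "B \<subseteq> A" "card B = 3"
  proof (cases "finite A")
    case True
    then show ?thesis using assms obtain_subset_with_card_n[of 3 A] that by auto
  next
    case False
    then show ?thesis using infinite_arbitrarily_large[of A 3] that by blast
  qed
  then show thesis using that unfolding card_3_iff by auto
qed

lemma branch_point_obtains_three_arms: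
  assumes X: "geodesic_space X" and b: "branch_point X b" and "0 < r"
  obtains t C1 C2 C3 q1 q2 q3 where "0 < t" "t \<le> r"
    "C1 \<in> components (X - {b})" "C2 \<in> components (X - {b})" "C3 \<in> components (X - {b})"
    "C1 \<noteq> C2" "C2 \<noteq> C3" "C1 \<noteq> C3"
    "q1 \<in> C1" "q2 \<in> C2" "q3 \<in> C3" "dist b q1 = t" "dist b q2 = t" "dist b q3 = t"
proof -
  have "b \<in> X" using b unfolding branch_point_def by simp
  obtain C1 C2 C3 where C: "C1 \<in> components (X - {b})" "C2 \<in> components (X - {b})"
      "C3 \<in> components (X - {b})" and "C1 \<noteq> C2" "C2 \<noteq> C3" "C1 \<noteq> C3"
    using b obtain_three_distinct unfolding branch_point_def by metis
  obtain p1 p2 p3 where p: "p1 \<in> C1" "p2 \<in> C2" "p3 \<in> C3"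
    using C in_components_nonempty by (metis ex_in_conv)
  have "p1 \<noteq> b" "p2 \<noteq> b" "p3 \<noteq> b"
    using p C in_components_subset by blast+
  define t where "t = min r (min (dist b p1) (min (dist b p2) (dist b p3)))"
  have "0 < t" unfolding t_def using \<open>0 < r\<close> \<open>p1 \<noteq> b\<close> \<open>p2 \<noteq> b\<close> \<open>p3 \<noteq> b\<close> by simp
  have "t \<le> r" "t \<le> dist b p1" "t \<le> dist b p2" "t \<le> dist b p3" unfolding t_def by auto
  then show thesis
    using exists_point_at_dist_in_component[OF X \<open>b \<in> X\<close> C(1) p(1) \<open>0 < t\<close>]
      exists_point_at_dist_in_component[OF X \<open>b \<in> X\<close> C(2) p(2) \<open>0 < t\<close>]
      exists_point_at_dist_in_component[OF X \<open>b \<in> X\<close> C(3) p(3) \<open>0 < t\<close>]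
      that[OF \<open>0 < t\<close> _ C \<open>C1 \<noteq> C2\<close> \<open>C2 \<noteq> C3\<close> \<open>C1 \<noteq> C3\<close>] by metis
qed

lemma exp_minus_dist_le_at_cut_point:
  assumes X: "geodesic_space X" and C: "C \<in> components (X - {b})"
    and "q \<in> C" "dist b q = t" "y \<in> X"
  shows "exp (- dist q y) \<le> (if y \<in> C then exp t else exp (- t)) * exp (- dist b y)"
proof (cases "y \<in> C")
  case True
  have "dist b y \<le> dist b q + dist q y" by (rule dist_triangle)
  then have "- dist q y \<le> t + - dist b y" using \<open>dist b q = t\<close> by simp
  then have "exp (- dist q y) \<le> exp t * exp (- dist b y)"
    by (simp only: exp_le_cancel_iff flip: exp_add)
  with True show ?thesis by simp
next
  case False
  have "dist q y = t + dist b y"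
    using dist_through_cut_point[OF X C \<open>q \<in> C\<close> \<open>y \<in> X\<close> False] \<open>dist b q = t\<close>
    by (simp add: dist_commute)
  with False show ?thesis by (simp flip: exp_add)
qed

lemma diversity_potential_three_arms_le:
  assumes M: "borel_prob_on X M" and X: "geodesic_space X"
    and C: "C1 \<in> components (X - {b})" "C2 \<in> components (X - {b})" "C3 \<in> components (X - {b})"
    and "C1 \<noteq> C2" "C2 \<noteq> C3" "C1 \<noteq> C3"
    and q: "q1 \<in> C1" "q2 \<in> C2" "q3 \<in> C3" "dist b q1 = t" "dist b q2 = t" "dist b q3 = t"
    and "0 \<le> t"
  shows "diversity_potential M q1 + diversity_potential M q2 + diversity_potential M q3
    \<le> (exp t + 2 * exp (- t)) * diversity_potential M b"
proof -
  interpret prob_space M by (rule borel_prob_on_prob_space[OF M])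
  have disjoint: "C1 \<inter> C2 = {}" "C2 \<inter> C3 = {}" "C1 \<inter> C3 = {}"
    using components_nonoverlap C \<open>C1 \<noteq> C2\<close> \<open>C2 \<noteq> C3\<close> \<open>C1 \<noteq> C3\<close> by blast+
  have "exp (- t) \<le> exp t" using \<open>0 \<le> t\<close> by simp
  have pointwise: "exp (- dist q1 y) + exp (- dist q2 y) + exp (- dist q3 y)
      \<le> (exp t + 2 * exp (- t)) * exp (- dist b y)" if "y \<in> X" for y
  proof -
    let ?c = "\<lambda>C. if y \<in> C then exp t else exp (- t)"
    have "exp (- dist q1 y) + exp (- dist q2 y) + exp (- dist q3 y)
        \<le> (?c C1 + ?c C2 + ?c C3) * exp (- dist b y)"
      using exp_minus_dist_le_at_cut_point[OF X C(1) q(1) q(4) that]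
        exp_minus_dist_le_at_cut_point[OF X C(2) q(2) q(5) that]
        exp_minus_dist_le_at_cut_point[OF X C(3) q(3) q(6) that]
      by (simp add: distrib_right)
    also have "\<dots> \<le> (exp t + 2 * exp (- t)) * exp (- dist b y)"
      using disjoint \<open>exp (- t) \<le> exp t\<close> by (intro mult_right_mono) auto
    finally show ?thesis .
  qed
  note int = exp_minus_dist_integrable[OF M]
  have "diversity_potential M q1 + diversity_potential M q2 + diversity_potential M q3
      = (\<integral>y. exp (- dist q1 y) + exp (- dist q2 y) + exp (- dist q3 y) \<partial>M)"
    unfolding diversity_potential_def using int by simp
  also have "\<dots> \<le> (\<integral>y. (exp t + 2 * exp (- t)) * exp (- dist b y) \<partial>M)"
    using int pointwise borel_prob_on_space[OF M] by (intro integral_mono) auto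
  also have "\<dots> = (exp t + 2 * exp (- t)) * diversity_potential M b"
    unfolding diversity_potential_def by simp
  finally show ?thesis .
qed

lemma exp_add_two_exp_minus_lt_three:
  fixes t :: real
  assumes "0 < t" "t < ln 2"
  shows "exp t + 2 * exp (- t) < 3"
proof -
  have "1 < exp t" "exp t < 2"
    using assms exp_less_cancel_iff[of t "ln 2"] by auto
  then have "exp t * exp t + 2 < 3 * exp t"
    using mult_pos_neg[of "exp t - 1" "exp t - 2"] by (simp add: algebra_simps)
  then show ?thesis by (simp add: exp_minus field_simps)
qed

theorem theorem5p1:
  fixes X :: "'a::metric_space set" and M :: "'a measure"
  assumes "compact X" and "R_tree X" and "diversity_maximizing X M"
  shows "\<forall>x\<in>X. branch_point X x \<longrightarrow> x \<notin> measure_support X M"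
proof (intro ballI impI notI)
  fix b assume "b \<in> X" "branch_point X b" and support: "b \<in> measure_support X M"
  define K where "K = diversity_potential M"
  define E where "E = diversity_energy M"
  have M: "borel_prob_on X M" using assms(3) by (rule diversity_maximizing_borel_prob_on)
  have X: "geodesic_space X" using assms(2) by (rule R_tree_imp_geodesic_space)
  have "0 < ln 2 / (2::real)" by simp
  obtain t C1 C2 C3 q1 q2 q3 where "0 < t" "t \<le> ln 2 / 2" and arms:
    "C1 \<in> components (X - {b})" "C2 \<in> components (X - {b})" "C3 \<in> components (X - {b})"
    "C1 \<noteq> C2" "C2 \<noteq> C3" "C1 \<noteq> C3"
    "q1 \<in> C1" "q2 \<in> C2" "q3 \<in> C3" "dist b q1 = t" "dist b q2 = t" "dist b q3 = t"
    using branch_point_obtains_three_arms[OF X \<open>branch_point X b\<close> \<open>0 < ln 2 / 2\<close>] .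
  have "q1 \<in> X" "q2 \<in> X" "q3 \<in> X" using arms in_components_subset by blast+
  then have "E \<le> K q1" "E \<le> K q2" "E \<le> K q3"
    using diversity_maximizing_energy_le_potential[OF assms(3)] unfolding E_def K_def by blast+
  then have "3 * E \<le> K q1 + K q2 + K q3" by linarith
  also have "\<dots> \<le> (exp t + 2 * exp (- t)) * K b"
    unfolding K_def using diversity_potential_three_arms_le[OF M X arms] \<open>0 < t\<close> by simp
  also have "\<dots> < 3 * K b"
    using exp_add_two_exp_minus_lt_three[of t] \<open>0 < t\<close> \<open>t \<le> ln 2 / 2\<close>
      diversity_potential_pos[OF M, of b] unfolding K_def by simp
  also have "\<dots> \<le> 3 * E"
    using diversity_maximizing_potential_le_energy[OF assms(3) support] unfolding E_def K_def by simp
  finally show False by simp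
qed

end
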